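(* Let $Q:(-\infty,-1)\to(-\infty,0)$ be the inverse of the strictly increasing function $G\mapsto G-e^G$ on $(-\infty,0)$, and define $R:\mathbb{R}\to\mathbb{R}$ by $R(V)=-2(1-e^{Q(V)})^2$ for $V<-1$ and $R(V)=4(V+1)$ for $V\ge -1$. For each $m<-1$ let $n(m)>0$ be the unique number such that the solution of the initial value problem $V''-3V'=R(V)$, $V(0)=m$, $V'(0)=-n(m)$ (prime denoting $d/ds$) is negative-valued and solves the two-point boundary value problem $V''-3V'=R(V)$ on $(-\infty,\infty)$, $V(-\infty)=-1$, $V(\infty)=-\infty$. Then the correct shooting slope $-n(m)<0$ depends on $m$ continuously and monotonically, so that $n(m_1)>n(m_2)>0$ whenever $m_1<m_2<-1$.
   Context: Existence and uniqueness of $n(m)$ for each $m<-1$ is established in the paper; the claim concerns the resulting function $m\mapsto n(m)$ on $(-\infty,-1)$. *)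

theory Defs
  imports "HOL-Analysis.Analysis"
begin

definition Q :: "real \<Rightarrow> real" where
  "Q = the_inv_into {..<0} (\<lambda>G. G - exp G)"

definition R :: "real \<Rightarrow> real" where
  "R V = (if V < -1 then - 2 * (1 - exp (Q V))^2 else 4 * (V + 1))"

definition good_slope :: "real \<Rightarrow> real \<Rightarrow> bool" where
  "good_slope m n \<longleftrightarrow> n > 0 \<and>
     (\<exists>V V' :: real \<Rightarrow> real.
        (\<forall>s. (V has_real_derivative V' s) (at s)) \<and>
        (\<forall>s. (V' has_real_derivative (3 * V' s + R (V s))) (at s)) \<and>
        V 0 = m \<and> V' 0 = - n \<and>
        (\<forall>s. V s < 0) \<and>
        (V \<longlongrightarrow> -1) at_bot \<and>
        filterlim V at_bot at_top)"

definition nfun :: "real \<Rightarrow> real" where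
  "nfun m = (THE n. good_slope m n)"

end

theory Submission
  imports Defs
begin

text \<open>On the half-line \<open>V < -1\<close> we have \<open>R V \<le> 0\<close>, so \<open>(exp (-3 s) V')' = exp (-3 s) R V \<le> 0\<close>:
  along a solution started below \<open>-1\<close> with negative slope, the slope only becomes more negative
  and the solution never comes back up to \<open>-1\<close>. The connecting orbit \<open>V\<close> through \<open>m\<close> is
  time-translation invariant, so by uniqueness \<open>n (V t) = - V' t\<close> for all \<open>t \<ge> 0\<close>. Since \<open>V\<close>
  decreases to \<open>-\<infinity>\<close>, every \<open>m' < m\<close> is some \<open>V t\<close> with \<open>t > 0\<close>, whence
  \<open>n m' = - V' t > - V' 0 = n m\<close>; and near \<open>t = 0\<close> the map \<open>V\<close> is a decreasing homeomorphism,
  so \<open>n = - V' \<circ> V\<inverse>\<close> is continuous.\<close>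

lemma R_nonpos: "x \<le> -1 \<Longrightarrow> R x \<le> 0"
  unfolding R_def by simp

locale ode_solution =
  fixes V V' :: "real \<Rightarrow> real"
  assumes has_deriv_V: "(V has_real_derivative V' s) (at s)"
    and has_deriv_V': "(V' has_real_derivative 3 * V' s + R (V s)) (at s)"
begin

lemma isCont_V: "isCont V s"
  using has_deriv_V by (rule DERIV_isCont)

lemma isCont_V': "isCont V' s"
  using has_deriv_V' by (rule DERIV_isCont)

lemma shift: "ode_solution (\<lambda>s. V (s + t)) (\<lambda>s. V' (s + t))"
  by unfold_locales (simp_all add: DERIV_shift[symmetric] has_deriv_V has_deriv_V')

lemma slope_le_exp_initial_slope:
  assumes "0 \<le> s" and below: "\<And>x. 0 \<le> x \<Longrightarrow> x \<le> s \<Longrightarrow> V x \<le> -1"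
  shows "V' s \<le> exp (3 * s) * V' 0"
proof -
  have "exp (- 3 * s) * V' s \<le> exp (- 3 * 0) * V' 0"
  proof (rule DERIV_nonpos_imp_nonincreasing[OF \<open>0 \<le> s\<close>])
    fix x assume "0 \<le> x" "x \<le> s"
    have "((\<lambda>x. exp (- 3 * x) * V' x) has_real_derivative exp (- 3 * x) * R (V x)) (at x)"
      by (auto intro!: derivative_eq_intros has_deriv_V' simp: algebra_simps)
    moreover have "exp (- 3 * x) * R (V x) \<le> 0"
      using R_nonpos[OF below[OF \<open>0 \<le> x\<close> \<open>x \<le> s\<close>]] by (simp add: mult_nonneg_nonpos)
    ultimately show "\<exists>y. ((\<lambda>x. exp (- 3 * x) * V' x) has_real_derivative y) (at x) \<and> y \<le> 0"
      by blast
  qed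
  then have "exp (3 * s) * (exp (- 3 * s) * V' s) \<le> exp (3 * s) * V' 0"
    by simp
  then show ?thesis
    by (simp add: exp_minus field_simps)
qed

lemma stays_below:
  assumes V0: "V 0 < -1" and V'0: "V' 0 < 0" and "0 \<le> s"
  shows "V s < -1"
proof (rule ccontr)
  assume "\<not> V s < -1"
  txt \<open>Let \<open>u\<close> be the first time at which \<open>V\<close> reaches \<open>-1\<close>; before \<open>u\<close> the slope stays
    negative, so \<open>V u < V 0\<close>.\<close>
  define S where "S = {x. 0 \<le> x \<and> -1 \<le> V x}"
  define u where "u = Inf S"
  have "s \<in> S" using \<open>0 \<le> s\<close> \<open>\<not> V s < -1\<close> by (simp add: S_def)
  have bdd: "bdd_below S" by (rule bdd_belowI[of _ 0]) (simp add: S_def)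
  have "closed S"
    unfolding S_def
    by (intro closed_Collect_conj closed_Collect_le continuous_intros
        continuous_at_imp_continuous_on ballI isCont_V)
  then have "u \<in> S"
    unfolding u_def using \<open>s \<in> S\<close> bdd closed_contains_Inf by blast
  have before_u: "V x < -1" if "0 \<le> x" "x < u" for x
    using cInf_lower[OF _ bdd, of x] that by (force simp: S_def u_def)
  have "0 < u"
    using \<open>u \<in> S\<close> V0 by (cases "u = 0") (auto simp: S_def)
  obtain z where z: "0 < z" "z < u" "V u - V 0 = (u - 0) * V' z"
    using MVT2[of 0 u V V'] \<open>0 < u\<close> has_deriv_V by blast
  have "V' z \<le> exp (3 * z) * V' 0"
    using z by (intro slope_le_exp_initial_slope) (auto intro: less_imp_le[OF before_u])
  also have "\<dots> < 0"
    using V'0 by (simp add: mult_pos_neg)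
  finally have "u * V' z < 0"
    using \<open>0 < u\<close> by (simp add: mult_pos_neg)
  then show False
    using z \<open>u \<in> S\<close> V0 by (simp add: S_def)
qed

lemma slope_decreasing:
  assumes "V 0 < -1" and "V' 0 < 0" and "0 < s"
  shows "V' s < V' 0"
proof -
  have "V' s \<le> exp (3 * s) * V' 0"
    using slope_le_exp_initial_slope[of s] stays_below assms by (simp add: less_imp_le)
  also have "\<dots> < V' 0"
    using assms by (simp add: mult_less_cancel_right2)
  finally show ?thesis .
qed

end

lemma filterlim_add_const_at_top: "filterlim (\<lambda>s::real. s + t) at_top at_top"
  by (subst add.commute) (rule filterlim_tendsto_add_at_top[OF tendsto_const filterlim_ident])

lemma filterlim_add_const_at_bot: "filterlim (\<lambda>s::real. s + t) at_bot at_bot"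
  by (subst add.commute) (simp add: filterlim_tendsto_add_at_bot_iff[OF tendsto_const] filterlim_ident)

locale connecting_orbit = ode_solution +
  assumes negative: "V s < 0"
    and tendsto_minus_one_at_bot: "(V \<longlongrightarrow> -1) at_bot"
    and filterlim_at_bot_at_top: "filterlim V at_bot at_top"
begin

lemma shift_orbit: "connecting_orbit (\<lambda>s. V (s + t)) (\<lambda>s. V' (s + t))"
proof (rule connecting_orbit.intro)
  show "ode_solution (\<lambda>s. V (s + t)) (\<lambda>s. V' (s + t))"
    by (rule shift)
  show "connecting_orbit_axioms (\<lambda>s. V (s + t))"
    using filterlim_compose[OF tendsto_minus_one_at_bot filterlim_add_const_at_bot]
      filterlim_compose[OF filterlim_at_bot_at_top filterlim_add_const_at_top]
    by unfold_locales (simp_all add: negative)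
qed

lemma reaches_level:
  assumes "y < V 0"
  obtains t where "0 < t" "V t = y"
proof -
  obtain T where T: "\<And>s. T \<le> s \<Longrightarrow> V s \<le> y"
    using filterlim_at_bot_at_top unfolding filterlim_at_bot eventually_at_top_linorder by blast
  obtain t where t: "0 \<le> t" "t \<le> max T 0" "V t = y"
    using IVT2[of V "max T 0" y 0] T[of "max T 0"] assms isCont_V by auto
  with assms have "0 < t"
    by (cases "t = 0") auto
  with t show ?thesis
    using that by blast
qed

end

lemma good_slope_iff:
  "good_slope m n \<longleftrightarrow> 0 < n \<and> (\<exists>V V'. connecting_orbit V V' \<and> V 0 = m \<and> V' 0 = - n)"
  unfolding good_slope_def connecting_orbit_def connecting_orbit_axioms_def ode_solution_def
  by blast

lemma good_slope_along_orbit: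
  assumes "connecting_orbit V V'" "V' t < 0"
  shows "good_slope (V t) (- V' t)"
  unfolding good_slope_iff using assms connecting_orbit.shift_orbit by fastforce

lemma isCont_through_decreasing_parametrization:
  fixes f g h :: "real \<Rightarrow> real"
  assumes "0 < d"
    and cont_g: "\<And>z. \<bar>z - x\<bar> \<le> d \<Longrightarrow> isCont g z"
    and decreasing: "\<And>y z. x - d \<le> y \<Longrightarrow> y < z \<Longrightarrow> z \<le> x + d \<Longrightarrow> g z < g y"
    and cont_h: "isCont h x"
    and f_g: "\<And>z. \<bar>z - x\<bar> \<le> d \<Longrightarrow> f (g z) = h z"
  shows "isCont f (g x)"
proof -
  define g_inv where "g_inv = the_inv_into {x - d..x + d} g"
  have "inj_on g {x - d..x + d}"
    by (rule inj_onI) (metis atLeastAtMost_iff decreasing less_irrefl linorder_neqE_linordered_idom)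
  then have g_inv_g: "g_inv (g z) = z" if "\<bar>z - x\<bar> \<le> d" for z
    unfolding g_inv_def using that by (intro the_inv_into_f_f) auto
  have "isCont g_inv (g x)"
    using isCont_inverse_function[OF \<open>0 < d\<close>] g_inv_g cont_g by blast
  then have cont: "isCont (\<lambda>y. h (g_inv y)) (g x)"
    by (rule isCont_o2) (use g_inv_g[of x] cont_h \<open>0 < d\<close> in simp)
  have eq: "\<forall>\<^sub>F y in nhds (g x). f y = h (g_inv y)"
  proof (rule eventually_mono)
    show "\<forall>\<^sub>F y in nhds (g x). y \<in> {g (x + d)<..<g (x - d)}"
      using decreasing[of x "x + d"] decreasing[of "x - d" x] \<open>0 < d\<close>
      by (intro eventually_nhds_in_open) auto
  next
    fix y assume "y \<in> {g (x + d)<..<g (x - d)}"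
    moreover have "\<forall>z. x - d \<le> z \<and> z \<le> x + d \<longrightarrow> isCont g z"
      using cont_g by (simp add: abs_le_iff)
    ultimately obtain z where "x - d \<le> z" "z \<le> x + d" "g z = y"
      using IVT2[of g "x + d" y "x - d"] \<open>0 < d\<close> by auto
    then show "f y = h (g_inv y)"
      using f_g g_inv_g by auto
  qed
  show ?thesis
    using isCont_cong[OF eq] cont by simp
qed

context
  assumes unique: "\<forall>m < -1. \<exists>!n. good_slope m n"
begin

lemma good_slope_nfun: "m < -1 \<Longrightarrow> good_slope m (nfun m)"
  unfolding nfun_def using unique by (metis theI')

lemma nfun_eqI: "m < -1 \<Longrightarrow> good_slope m n \<Longrightarrow> nfun m = n"
  unfolding nfun_def using unique by (metis the1_equality)

lemma orbit_through_nfun: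
  assumes "m < -1"
  obtains V V' where "connecting_orbit V V'" "V 0 = m" "V' 0 = - nfun m" "0 < nfun m"
  using good_slope_nfun[OF assms] unfolding good_slope_iff by blast

lemma nfun_along_orbit:
  assumes "connecting_orbit V V'" "V t < -1" "V' t < 0"
  shows "nfun (V t) = - V' t"
  using assms by (intro nfun_eqI good_slope_along_orbit)

lemma nfun_pos: "m < -1 \<Longrightarrow> 0 < nfun m"
  by (metis orbit_through_nfun)

lemma nfun_strict_antimono:
  assumes "m1 < m2" "m2 < -1"
  shows "nfun m2 < nfun m1"
proof -
  obtain V V' where "connecting_orbit V V'" and V0: "V 0 = m2" and V'0: "V' 0 = - nfun m2"
    and "0 < nfun m2"
    using orbit_through_nfun[OF \<open>m2 < -1\<close>] by blast
  interpret connecting_orbit V V' by fact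
  obtain t where "0 < t" "V t = m1"
    using reaches_level assms V0 by metis
  have "V' t < V' 0"
    using slope_decreasing \<open>0 < t\<close> assms V0 V'0 \<open>0 < nfun m2\<close> by simp
  moreover have "nfun m1 = - V' t"
    using nfun_along_orbit[of V V' t] \<open>connecting_orbit V V'\<close> \<open>V t = m1\<close> \<open>V' t < V' 0\<close>
      assms V'0 \<open>0 < nfun m2\<close> by simp
  ultimately show ?thesis
    using V'0 by simp
qed

lemma isCont_nfun:
  assumes "m < -1"
  shows "isCont nfun m"
proof -
  obtain V V' where "connecting_orbit V V'" and V0: "V 0 = m" and V'0: "V' 0 = - nfun m"
    and "0 < nfun m"
    using orbit_through_nfun[OF assms] by blast
  interpret connecting_orbit V V' by fact
  have "\<forall>\<^sub>F z in nhds 0. V z < -1 \<and> V' z < 0"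
    using isCont_V[of 0] isCont_V'[of 0] assms V0 V'0 \<open>0 < nfun m\<close>
    unfolding isCont_def tendsto_at_iff_tendsto_nhds
    by (intro eventually_conj order_tendstoD(2)) auto
  then obtain d0 where "0 < d0" and near0: "\<And>z. dist z 0 < d0 \<Longrightarrow> V z < -1 \<and> V' z < 0"
    unfolding eventually_nhds_metric by blast
  define d where "d = d0 / 2"
  have "0 < d" and near: "\<And>z. \<bar>z - 0\<bar> \<le> d \<Longrightarrow> V z < -1 \<and> V' z < 0"
    using \<open>0 < d0\<close> near0 by (auto simp: d_def)
  have "isCont nfun (V 0)"
  proof (rule isCont_through_decreasing_parametrization
      [where g = V and x = 0 and h = "\<lambda>z. - V' z", OF \<open>0 < d\<close>])
    show "isCont (\<lambda>z. - V' z) 0"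
      using isCont_V' by (rule isCont_minus)
    show "V z < V y" if "0 - d \<le> y" "y < z" "z \<le> 0 + d" for y z
    proof (rule DERIV_neg_imp_decreasing[OF \<open>y < z\<close>])
      fix w assume "y \<le> w" "w \<le> z"
      then have "V' w < 0"
        using that near[of w] by simp
      then show "\<exists>D. (V has_real_derivative D) (at w) \<and> D < 0"
        using has_deriv_V by blast
    qed
    show "nfun (V z) = - V' z" if "\<bar>z - 0\<bar> \<le> d" for z
      using near[OF that] nfun_along_orbit \<open>connecting_orbit V V'\<close> by blast
  qed (rule isCont_V)
  then show ?thesis
    using V0 by simp
qed

end

theorem lemma4p7:
  assumes "\<forall>m < -1. \<exists>!n. good_slope m n"
  shows "continuous_on {..< -1} nfun \<and>
         (\<forall>m1 m2. m1 < m2 \<and> m2 < -1 \<longrightarrow> nfun m1 > nfun m2 \<and> nfun m2 > 0)"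
  using isCont_nfun[OF assms] nfun_strict_antimono[OF assms] nfun_pos[OF assms]
  by (auto intro!: continuous_at_imp_continuous_on)

end
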